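(* Assume $0<\underline{d}_w<\overline{d}_w\le L\cos(\underline{\theta}_w)<L/\cos(\underline{\theta}_w)$, where $\underline{\theta}_w\in(0,\pi/2)$. Consider the optimization problem $$\max_{P,d_w,\theta_w}\ \gamma_b(P,d_w,\theta_w)\quad\text{s.t.}\quad \mathcal{D}_{01}(P,d_w,\theta_w)\le2\epsilon^2,\ \ 0<P\le P_m,\ \ \underline{d}_w\le d_w\le\overline{d}_w,\ \ \underline{\theta}_w\le\theta_w\le\frac{\pi}{2}.$$ Then any optimal solution $(P^\ast,d_w^\ast,\theta_w^\ast)$ satisfies $d_w^\ast=\overline{d}_w$ and $\underline{\theta}_w\le\theta_w^\ast\le\arccos(\overline{d}_w/L)$. This conclusion holds regardless of the maximum transmit power constraint $P\le P_m$ (i.e., also when this constraint is removed).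
   Context: Setting: Willie and Bob are ground points at distance $L>0$; a UAV (transmitter) lies in the vertical plane through them, on Bob's side, at distance $d_w>0$ from Willie and at elevation angle $\theta_w\in[0,\pi/2]$ (radians) seen from Willie, and transmits with power $P$. Constants: path-loss exponents $\xi_{\mathrm{L}}<0$, $\xi_{\mathrm{N}}<0$; $a,b>0$; noise variances $\sigma_b^2,\sigma_w^2>0$; blocklength $n\in\mathbb{N}$; covertness parameter $\epsilon>0$; maximum power $P_m>0$. Define $d_b=\sqrt{L^2+d_w^2-2d_wL\cos(\theta_w)}$, $$p_b=\frac{1}{1+a\exp\!\left(-b\left[\frac{180}{\pi}\arcsin\!\left(\frac{d_w\sin\theta_w}{d_b}\right)-a\right]\right)},\qquad p_w=\frac{1}{1+a\exp\!\left(-b\left[\frac{180}{\pi}\theta_w-a\right]\right)},$$ $f(d_w,\theta_w)=d_b^{\xi_{\mathrm{L}}}p_b$, and the SNR at Bob $\gamma_b(P,d_w,\theta_w)=Pf(d_w,\theta_w)/\sigma_b^2$. With $\bar P=P d_w^{\xi_{\mathrm{L}}}p_w+P d_w^{\xi_{\mathrm{N}}}$, define the KL divergence $$\mathcal{D}_{01}(P,d_w,\theta_w)=\frac{n}{2}\left[\ln\!\left(\frac{\bar P+\sigma_w^2}{\sigma_w^2}\right)-\frac{\bar P}{\bar P+\sigma_w^2}\right].$$ *)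

theory Defs
  imports Complex_Main
begin

text \<open>Parameters: L (Willie--Bob distance), a, b (LoS probability constants),
  xiL, xiN (path-loss exponents), sb2, sw2 (noise variances), n (blocklength).\<close>

definition d_b :: "real \<Rightarrow> real \<Rightarrow> real \<Rightarrow> real" where
  "d_b L dw th = sqrt (L\<^sup>2 + dw\<^sup>2 - 2 * dw * L * cos th)"

definition p_b :: "real \<Rightarrow> real \<Rightarrow> real \<Rightarrow> real \<Rightarrow> real \<Rightarrow> real" where
  "p_b a b L dw th =
     1 / (1 + a * exp (- b * ((180 / pi) * arcsin (dw * sin th / d_b L dw th) - a)))"

definition p_w :: "real \<Rightarrow> real \<Rightarrow> real \<Rightarrow> real" where
  "p_w a b th = 1 / (1 + a * exp (- b * ((180 / pi) * th - a)))"

definition f_ch :: "real \<Rightarrow> real \<Rightarrow> real \<Rightarrow> real \<Rightarrow> real \<Rightarrow> real \<Rightarrow> real" where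
  "f_ch a b xiL L dw th = (d_b L dw th) powr xiL * p_b a b L dw th"

definition gamma_b :: "real \<Rightarrow> real \<Rightarrow> real \<Rightarrow> real \<Rightarrow> real \<Rightarrow> real \<Rightarrow> real \<Rightarrow> real \<Rightarrow> real" where
  "gamma_b a b xiL L sb2 P dw th = P * f_ch a b xiL L dw th / sb2"

definition Pbar :: "real \<Rightarrow> real \<Rightarrow> real \<Rightarrow> real \<Rightarrow> real \<Rightarrow> real \<Rightarrow> real \<Rightarrow> real" where
  "Pbar a b xiL xiN P dw th = P * dw powr xiL * p_w a b th + P * dw powr xiN"

definition D01 :: "nat \<Rightarrow> real \<Rightarrow> real \<Rightarrow> real \<Rightarrow> real \<Rightarrow> real \<Rightarrow> real \<Rightarrow> real \<Rightarrow> real \<Rightarrow> real" where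
  "D01 n a b xiL xiN sw2 P dw th =
     (let Q = Pbar a b xiL xiN P dw th in
      real n / 2 * (ln ((Q + sw2) / sw2) - Q / (Q + sw2)))"

text \<open>Feasible set of the optimisation problem; the argument \<open>Pmax\<close> is
  \<open>Some Pm\<close> when the power constraint \<open>P \<le> Pm\<close> is imposed and \<open>None\<close>
  when it is removed.\<close>

definition feasible :: "nat \<Rightarrow> real \<Rightarrow> real \<Rightarrow> real \<Rightarrow> real \<Rightarrow> real \<Rightarrow> real \<Rightarrow> real option \<Rightarrow> real \<Rightarrow> real \<Rightarrow> real \<Rightarrow> real \<Rightarrow> real \<Rightarrow> real \<Rightarrow> bool" where
  "feasible n a b xiL xiN sw2 eps Pmax dlo dhi thlo P dw th \<longleftrightarrow>
     D01 n a b xiL xiN sw2 P dw th \<le> 2 * eps\<^sup>2 \<and>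
     0 < P \<and> (case Pmax of None \<Rightarrow> True | Some Pm \<Rightarrow> P \<le> Pm) \<and>
     dlo \<le> dw \<and> dw \<le> dhi \<and> thlo \<le> th \<and> th \<le> pi / 2"

definition optimal :: "nat \<Rightarrow> real \<Rightarrow> real \<Rightarrow> real \<Rightarrow> real \<Rightarrow> real \<Rightarrow> real \<Rightarrow> real \<Rightarrow> real \<Rightarrow> real option \<Rightarrow> real \<Rightarrow> real \<Rightarrow> real \<Rightarrow> real \<Rightarrow> real \<Rightarrow> real \<Rightarrow> bool" where
  "optimal n a b xiL xiN L sb2 sw2 eps Pmax dlo dhi thlo P dw th \<longleftrightarrow>
     feasible n a b xiL xiN sw2 eps Pmax dlo dhi thlo P dw th \<and>
     (\<forall>P' dw' th'. feasible n a b xiL xiN sw2 eps Pmax dlo dhi thlo P' dw' th' \<longrightarrow>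
        gamma_b a b xiL L sb2 P' dw' th' \<le> gamma_b a b xiL L sb2 P dw th)"

end

theory Submission
  imports Defs
begin

text \<open>Keep the power \<open>P\<close> fixed and read \<open>(dw, th)\<close> as polar coordinates of the UAV
  around Willie, with Bob at distance \<open>L\<close> on the axis; then \<open>dw sin th / d_b\<close> is the sine
  of the elevation angle under which Bob sees the UAV. Moving the UAV away from Willie and
  lowering it decreases Willie's received power \<open>Pbar\<close> and hence the KL divergence, so
  covertness is preserved. Unless \<open>dw = dhi \<le> L cos th\<close>, such a move also brings the UAV
  strictly closer to Bob under a larger elevation angle: go out along the ray to \<open>dhi\<close> if
  the foot of the perpendicular from Bob lies beyond \<open>dhi\<close>, and otherwise go to the
  foot \<open>(dhi, arccos (dhi / L))\<close> on a lower ray. Both effects increase the SNR at Bob.\<close>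

definition sin_elev_b :: "real \<Rightarrow> real \<Rightarrow> real \<Rightarrow> real" where
  "sin_elev_b L dw th = dw * sin th / d_b L dw th"

lemma p_b_eq: "p_b a b L dw th =
    1 / (1 + a * exp (- b * ((180 / pi) * arcsin (sin_elev_b L dw th) - a)))"
  by (simp add: p_b_def sin_elev_b_def)

lemma logistic_pos:
  fixes c b t s :: real
  assumes "0 \<le> c"
  shows "0 < 1 / (1 + c * exp (- b * (t - s)))"
  using assms by (simp add: add_pos_nonneg)

lemma logistic_mono:
  fixes c b s t1 t2 :: real
  assumes "0 \<le> c" "0 \<le> b" "t1 \<le> t2"
  shows "1 / (1 + c * exp (- b * (t1 - s))) \<le> 1 / (1 + c * exp (- b * (t2 - s)))"
proof -
  have "exp (- b * (t2 - s)) \<le> exp (- b * (t1 - s))"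
    using assms by (simp add: mult_left_mono)
  then have "c * exp (- b * (t2 - s)) \<le> c * exp (- b * (t1 - s))"
    using assms by (simp add: mult_left_mono)
  moreover have "0 < 1 + c * exp (- b * (t2 - s))"
    using assms by (simp add: add_pos_nonneg)
  ultimately show ?thesis by (simp add: frac_le)
qed

lemma p_w_pos: "0 < a \<Longrightarrow> 0 < p_w a b th"
  unfolding p_w_def by (rule logistic_pos) simp

lemma p_w_mono:
  assumes "0 < a" "0 < b" "th' \<le> th"
  shows "p_w a b th' \<le> p_w a b th"
proof -
  have "180 / pi * th' \<le> 180 / pi * th" using assms by (intro mult_left_mono) auto
  then show ?thesis unfolding p_w_def using assms by (intro logistic_mono) auto
qed

lemma p_b_pos: "0 < a \<Longrightarrow> 0 < p_b a b L dw th"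
  unfolding p_b_def by (rule logistic_pos) simp

lemma p_b_mono:
  assumes "0 < a" "0 < b" "-1 \<le> sin_elev_b L dw th"
    "sin_elev_b L dw th \<le> sin_elev_b L dw' th'" "sin_elev_b L dw' th' \<le> 1"
  shows "p_b a b L dw th \<le> p_b a b L dw' th'"
proof -
  have "arcsin (sin_elev_b L dw th) \<le> arcsin (sin_elev_b L dw' th')"
    using assms by (intro arcsin_le_arcsin) auto
  then have "180 / pi * arcsin (sin_elev_b L dw th) \<le> 180 / pi * arcsin (sin_elev_b L dw' th')"
    by (intro mult_left_mono) auto
  then show ?thesis
    unfolding p_b_eq using assms by (intro logistic_mono) auto
qed

lemma d_b_eq_dist: "d_b L dw th = sqrt ((L - dw * cos th)\<^sup>2 + (dw * sin th)\<^sup>2)"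
proof -
  have "(L - dw * cos th)\<^sup>2 + (dw * sin th)\<^sup>2 = L\<^sup>2 + dw\<^sup>2 * ((sin th)\<^sup>2 + (cos th)\<^sup>2) - 2 * dw * L * cos th"
    by algebra
  then show ?thesis by (simp add: d_b_def)
qed

lemma d_b_pos:
  assumes "0 \<le> dw" "dw < L"
  shows "0 < d_b L dw th"
proof -
  have "dw * cos th \<le> dw" using assms mult_left_mono[of "cos th" 1 dw] by simp
  then have "0 < L - dw * cos th" using assms by linarith
  then show ?thesis unfolding d_b_eq_dist
    by (intro real_sqrt_gt_zero add_pos_nonneg) auto
qed

text \<open>\<open>\<bar>L sin th\<bar>\<close> is Bob's distance to the line of the ray.\<close>

lemma L_sin_le_d_b: "L * sin th \<le> d_b L dw th"
proof -
  have "(L * cos th - dw)\<^sup>2 + (L * sin th)\<^sup>2 = L\<^sup>2 + dw\<^sup>2 - 2 * dw * L * cos th"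
    using sin_cos_squared_add[of th] by algebra
  then have "(L * sin th)\<^sup>2 \<le> L\<^sup>2 + dw\<^sup>2 - 2 * dw * L * cos th"
    using zero_le_power2[of "L * cos th - dw"] by linarith
  then have "sqrt ((L * sin th)\<^sup>2) \<le> d_b L dw th"
    unfolding d_b_def by (rule real_sqrt_le_mono)
  then show ?thesis by simp
qed

lemma sin_elev_b_nonneg:
  assumes "0 \<le> dw" "dw < L" "0 \<le> sin th"
  shows "0 \<le> sin_elev_b L dw th"
  unfolding sin_elev_b_def using assms d_b_pos[OF assms(1,2), of th] by simp

lemma sin_elev_b_le_1:
  assumes "0 \<le> dw" "dw < L"
  shows "sin_elev_b L dw th \<le> 1"
proof -
  have "dw * sin th \<le> sqrt ((dw * sin th)\<^sup>2)" by simp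
  also have "\<dots> \<le> d_b L dw th" unfolding d_b_eq_dist by (rule real_sqrt_le_mono) simp
  finally show ?thesis
    unfolding sin_elev_b_def using d_b_pos[OF assms] by simp
qed

lemma d_b_decreasing:
  assumes "dw < d" "d \<le> L * cos th"
  shows "d_b L d th < d_b L dw th"
proof -
  have "(d - dw) * (d + dw - 2 * L * cos th) < 0"
    using assms by (intro mult_pos_neg) auto
  moreover have "(L\<^sup>2 + d\<^sup>2 - 2 * d * L * cos th) - (L\<^sup>2 + dw\<^sup>2 - 2 * dw * L * cos th)
      = (d - dw) * (d + dw - 2 * L * cos th)"
    by (simp add: algebra_simps power2_eq_square)
  ultimately show ?thesis unfolding d_b_def
    by (intro real_sqrt_less_mono) linarith
qed

lemma sin_elev_b_mono:
  assumes "0 \<le> dw" "dw \<le> d" "d < L" "0 \<le> sin th"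
  shows "sin_elev_b L dw th \<le> sin_elev_b L d th"
proof -
  have pos: "0 < d_b L dw th" "0 < d_b L d th"
    using assms by (auto intro: d_b_pos)
  have "d * cos th \<le> d" using assms mult_left_mono[of "cos th" 1 d] by simp
  then have "0 \<le> dw * (L - d * cos th)" using assms by simp
  moreover have "dw * (L - d * cos th) \<le> d * (L - dw * cos th)"
    using assms by (simp add: algebra_simps mult_right_mono)
  ultimately have "(dw * (L - d * cos th))\<^sup>2 + (dw * d * sin th)\<^sup>2
      \<le> (d * (L - dw * cos th))\<^sup>2 + (dw * d * sin th)\<^sup>2"
    by (simp add: power_mono)
  moreover have "dw\<^sup>2 * ((L - d * cos th)\<^sup>2 + (d * sin th)\<^sup>2) = (dw * (L - d * cos th))\<^sup>2 + (dw * d * sin th)\<^sup>2"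
    "d\<^sup>2 * ((L - dw * cos th)\<^sup>2 + (dw * sin th)\<^sup>2) = (d * (L - dw * cos th))\<^sup>2 + (dw * d * sin th)\<^sup>2"
    by algebra+
  ultimately have "dw\<^sup>2 * (d_b L d th)\<^sup>2 \<le> d\<^sup>2 * (d_b L dw th)\<^sup>2"
    unfolding d_b_eq_dist by simp
  then have "dw * d_b L d th \<le> d * d_b L dw th"
    using pos assms by (simp add: power_mult_distrib[symmetric] power2_le_iff_abs_le)
  then have "dw * sin th * d_b L d th \<le> d * sin th * d_b L dw th"
    using assms mult_right_mono[of "dw * d_b L d th" "d * d_b L dw th" "sin th"]
    by (simp add: algebra_simps)
  then show ?thesis
    unfolding sin_elev_b_def using pos by (simp add: divide_simps)
qed

text \<open>At \<open>th = arccos (d / L)\<close> the point at distance \<open>d\<close> from Willie is the foot of the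
  perpendicular from Bob.\<close>

lemma foot_point:
  assumes "0 < d" "d < L"
  shows "d_b L d (arccos (d / L)) = sqrt (L\<^sup>2 - d\<^sup>2)"
    and "sin_elev_b L d (arccos (d / L)) = d / L"
proof -
  have r: "-1 \<le> d / L" "d / L \<le> 1" using assms by (auto simp: field_simps)
  have sq: "(L\<^sup>2 - d\<^sup>2) / L\<^sup>2 = 1 - (d / L)\<^sup>2"
    using assms by (simp add: field_simps)
  show db: "d_b L d (arccos (d / L)) = sqrt (L\<^sup>2 - d\<^sup>2)"
    unfolding d_b_def cos_arccos[OF r] using assms by (simp add: power2_eq_square)
  have "sin (arccos (d / L)) = sqrt (L\<^sup>2 - d\<^sup>2) / L"
    unfolding sin_arccos[OF r] sq[symmetric] using assms by (simp add: real_sqrt_divide)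
  moreover have "0 < L\<^sup>2 - d\<^sup>2" using assms by (simp add: power_strict_mono)
  ultimately show "sin_elev_b L d (arccos (d / L)) = d / L"
    unfolding sin_elev_b_def db by simp
qed

lemma d_b_gt_foot:
  assumes "0 < dw" "dw \<le> d" "L * cos th < d"
  shows "sqrt (L\<^sup>2 - d\<^sup>2) < d_b L dw th"
proof -
  have "dw * (L * cos th) < dw * d" using assms by simp
  moreover have "0 \<le> (dw - d)\<^sup>2" by simp
  ultimately have "L\<^sup>2 - d\<^sup>2 < L\<^sup>2 + dw\<^sup>2 - 2 * dw * L * cos th"
    by (simp add: power2_eq_square algebra_simps)
  then show ?thesis unfolding d_b_def by (rule real_sqrt_less_mono)
qed

lemma sin_elev_b_le_foot:
  assumes "0 \<le> dw" "dw \<le> d" "0 < L" "0 < d_b L dw th" "0 \<le> sin th"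
  shows "sin_elev_b L dw th \<le> d / L"
proof -
  have "dw * (L * sin th) \<le> d * d_b L dw th"
    using assms L_sin_le_d_b[of L th dw] by (intro mult_mono) auto
  then show ?thesis
    unfolding sin_elev_b_def using assms by (simp add: divide_simps algebra_simps)
qed

lemma le_arccos_iff_le_cos:
  fixes th y :: real
  assumes "0 \<le> th" "th \<le> pi" "\<bar>y\<bar> \<le> 1"
  shows "th \<le> arccos y \<longleftrightarrow> y \<le> cos th"
  using arccos_le_mono[of "cos th" y] arccos_cos[OF assms(1,2)] assms(3) by simp

lemma f_ch_less:
  assumes "0 < a" "0 < b" "xiL < 0" "0 < d_b L dw' th'" "d_b L dw' th' < d_b L dw th"
    "0 \<le> sin_elev_b L dw th" "sin_elev_b L dw th \<le> sin_elev_b L dw' th'"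
    "sin_elev_b L dw' th' \<le> 1"
  shows "f_ch a b xiL L dw th < f_ch a b xiL L dw' th'"
proof -
  have "d_b L dw th powr xiL * p_b a b L dw th < d_b L dw' th' powr xiL * p_b a b L dw th"
    using assms p_b_pos[of a b L dw th] by (simp add: powr_less_mono2_neg)
  also have "\<dots> \<le> d_b L dw' th' powr xiL * p_b a b L dw' th'"
    using assms by (intro mult_left_mono p_b_mono) auto
  finally show ?thesis by (simp add: f_ch_def)
qed

lemma Pbar_nonneg:
  assumes "0 < a" "0 \<le> P"
  shows "0 \<le> Pbar a b xiL xiN P dw th"
  unfolding Pbar_def using assms p_w_pos[of a b th] by simp

lemma Pbar_antimono:
  assumes "0 < a" "0 < b" "xiL \<le> 0" "xiN \<le> 0" "0 \<le> P" "0 < dw" "dw \<le> dw'" "th' \<le> th"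
  shows "Pbar a b xiL xiN P dw' th' \<le> Pbar a b xiL xiN P dw th"
proof -
  have "dw' powr xiL * p_w a b th' \<le> dw powr xiL * p_w a b th"
    using assms p_w_pos[of a b th'] p_w_mono[of a b th' th]
    by (intro mult_mono powr_mono2') auto
  moreover have "dw' powr xiN \<le> dw powr xiN" using assms by (intro powr_mono2') auto
  ultimately show ?thesis
    unfolding Pbar_def using assms
    by (metis add_mono mult.assoc mult_left_mono)
qed

lemma ln_ratio_minus_frac_mono:
  fixes s q1 q2 :: real
  assumes "0 < s" "0 \<le> q1" "q1 \<le> q2"
  shows "ln ((q1 + s) / s) - q1 / (q1 + s) \<le> ln ((q2 + s) / s) - q2 / (q2 + s)"
proof -
  define u where "u = (q1 + s) / (q2 + s)"
  have "0 < u" using assms by (simp add: u_def)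
  have "ln ((q2 + s) / s) - ln ((q1 + s) / s) = - ln u"
    using assms by (simp add: u_def ln_div)
  moreover have "q2 / (q2 + s) - q1 / (q1 + s) = (s / (q1 + s)) * ((q2 - q1) / (q2 + s))"
    using assms by (simp add: field_simps)
  moreover have "\<dots> \<le> (q2 - q1) / (q2 + s)"
    using assms mult_right_mono[of "s / (q1 + s)" 1 "(q2 - q1) / (q2 + s)"] by simp
  moreover have "(q2 - q1) / (q2 + s) = 1 - u"
    using assms by (simp add: u_def field_simps)
  ultimately show ?thesis
    using ln_le_minus_one[OF \<open>0 < u\<close>] by linarith
qed

lemma D01_antimono:
  assumes "0 < a" "0 < b" "xiL \<le> 0" "xiN \<le> 0" "0 < sw2" "0 \<le> P" "0 < dw" "dw \<le> dw'" "th' \<le> th"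
  shows "D01 n a b xiL xiN sw2 P dw' th' \<le> D01 n a b xiL xiN sw2 P dw th"
  unfolding D01_def Let_def
  using assms by (intro mult_left_mono ln_ratio_minus_frac_mono Pbar_nonneg Pbar_antimono) auto

lemma feasible_move:
  assumes "feasible n a b xiL xiN sw2 eps Pmax dlo dhi thlo P dw th"
    and "0 < a" "0 < b" "xiL \<le> 0" "xiN \<le> 0" "0 < sw2" "0 < dlo"
    and "dw \<le> dw'" "dw' \<le> dhi" "thlo \<le> th'" "th' \<le> th"
  shows "feasible n a b xiL xiN sw2 eps Pmax dlo dhi thlo P dw' th'"
proof -
  have "D01 n a b xiL xiN sw2 P dw' th' \<le> D01 n a b xiL xiN sw2 P dw th"
    using assms unfolding feasible_def by (intro D01_antimono) auto
  then show ?thesis using assms unfolding feasible_def by auto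
qed

lemma better_position:
  assumes "0 \<le> thlo" "dhi \<le> L * cos thlo" "0 < dw" "dw \<le> dhi" "dhi < L"
    "thlo \<le> th" "th \<le> pi / 2" "\<not> (dw = dhi \<and> dhi \<le> L * cos th)"
  obtains dw' th' where "dw \<le> dw'" "dw' \<le> dhi" "thlo \<le> th'" "th' \<le> th"
    "d_b L dw' th' < d_b L dw th" "sin_elev_b L dw th \<le> sin_elev_b L dw' th'"
proof (cases "dhi \<le> L * cos th")
  case True
  with assms have "dw < dhi" by auto
  moreover have "0 \<le> sin th" using assms by (intro sin_ge_zero) auto
  ultimately show ?thesis
    using assms True d_b_decreasing[of dw dhi L th] sin_elev_b_mono[of dw dhi L th]
    by (intro that[of dhi th]) auto
next
  case False
  define th0 where "th0 = arccos (dhi / L)"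
  have L: "0 < L" "\<bar>dhi / L\<bar> \<le> 1" using assms by auto
  have "thlo \<le> th0" "\<not> th \<le> th0"
    unfolding th0_def using assms False L
    by (simp_all add: le_arccos_iff_le_cos pos_divide_le_eq mult.commute)
  moreover have "d_b L dhi th0 < d_b L dw th"
    unfolding th0_def using assms False by (simp add: foot_point d_b_gt_foot)
  moreover have "sin_elev_b L dw th \<le> sin_elev_b L dhi th0"
    unfolding th0_def using assms d_b_pos[of dw L th]
    by (simp add: foot_point sin_elev_b_le_foot sin_ge_zero)
  ultimately show ?thesis using assms by (intro that[of dhi th0]) auto
qed

lemma optimal_imp_boundary:
  assumes "optimal n a b xiL xiN L sb2 sw2 eps Pmax dlo dhi thlo P dw th"
    and "0 < a" "0 < b" "xiL < 0" "xiN \<le> 0" "0 < sb2" "0 < sw2"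
    and "0 < dlo" "0 \<le> thlo" "dhi \<le> L * cos thlo" "dhi < L"
  shows "dw = dhi \<and> dhi \<le> L * cos th"
proof (rule ccontr)
  assume not_boundary: "\<not> ?thesis"
  have feas: "feasible n a b xiL xiN sw2 eps Pmax dlo dhi thlo P dw th"
    using assms(1) by (simp add: optimal_def)
  then have "0 < P" "0 < dw" "dw \<le> dhi" "thlo \<le> th" "th \<le> pi / 2"
    using assms by (auto simp: feasible_def)
  then obtain dw' th' where pos: "dw \<le> dw'" "dw' \<le> dhi" "thlo \<le> th'" "th' \<le> th"
    and closer: "d_b L dw' th' < d_b L dw th"
    and higher: "sin_elev_b L dw th \<le> sin_elev_b L dw' th'"
    using better_position[of thlo dhi L dw th] assms not_boundary by blast
  have "feasible n a b xiL xiN sw2 eps Pmax dlo dhi thlo P dw' th'"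
    using feasible_move[OF feas] assms pos by auto
  then have "gamma_b a b xiL L sb2 P dw' th' \<le> gamma_b a b xiL L sb2 P dw th"
    using assms(1) by (simp add: optimal_def)
  moreover have "f_ch a b xiL L dw th < f_ch a b xiL L dw' th'"
    using assms pos \<open>0 < dw\<close> \<open>th \<le> pi / 2\<close> closer higher
    by (intro f_ch_less d_b_pos sin_elev_b_nonneg sin_elev_b_le_1 sin_ge_zero) auto
  then have "gamma_b a b xiL L sb2 P dw th < gamma_b a b xiL L sb2 P dw' th'"
    unfolding gamma_b_def using \<open>0 < P\<close> assms
    by (intro divide_strict_right_mono mult_strict_left_mono) auto
  ultimately show False by simp
qed

theorem theorem1:
  fixes L a b xiL xiN sb2 sw2 eps Pm dlo dhi thlo :: real and n :: nat
  assumes "L > 0" and "xiL < 0" and "xiN < 0" and "a > 0" and "b > 0"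
    and "sb2 > 0" and "sw2 > 0" and "n > 0" and "eps > 0" and "Pm > 0"
    and "0 < thlo" and "thlo < pi / 2"
    and "0 < dlo" and "dlo < dhi" and "dhi \<le> L * cos thlo" and "L * cos thlo < L / cos thlo"
  shows "\<forall>Pmax \<in> {Some Pm, None}. \<forall>P dw th.
           optimal n a b xiL xiN L sb2 sw2 eps Pmax dlo dhi thlo P dw th \<longrightarrow>
           dw = dhi \<and> thlo \<le> th \<and> th \<le> arccos (dhi / L)"
proof (intro ballI allI impI)
  fix Pmax P dw th
  assume opt: "optimal n a b xiL xiN L sb2 sw2 eps Pmax dlo dhi thlo P dw th"
  have "cos thlo < 1"
    using assms cos_monotone_0_pi[of 0 thlo] by simp
  then have "L * cos thlo < L" using \<open>L > 0\<close> by simp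
  then have "dhi < L" using assms by linarith
  then have boundary: "dw = dhi \<and> dhi \<le> L * cos th"
    using optimal_imp_boundary[OF opt] assms by simp
  have "thlo \<le> th" "th \<le> pi / 2"
    using opt by (auto simp: optimal_def feasible_def)
  moreover have "\<bar>dhi / L\<bar> \<le> 1"
    using assms \<open>dhi < L\<close> by auto
  ultimately show "dw = dhi \<and> thlo \<le> th \<and> th \<le> arccos (dhi / L)"
    using boundary assms
    by (simp add: le_arccos_iff_le_cos pos_divide_le_eq mult.commute)
qed

end
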